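(* Let $M\geq 1$ be an integer and let $(\tau^\prime,R)$ be an $M$-layer medium for transmission, with $\tau^\prime=(\tau_0,\ldots,\tau_{M+1})$, $\tau=(\tau_0,\ldots,\tau_M)$, $R=(R_0,\ldots,R_M)$, and write $|\tau^\prime|=\tau_0+\cdots+\tau_{M+1}$. Then \[ H^{(\tau^\prime,R)}(t)=\sum_{k\in\{0\}\times\mathbb{Z}^M_+}b(R,k)\,\delta\bigl(t-\tfrac{1}{2}|\tau^\prime|-\langle k,\tau\rangle\bigr), \] where for each $k\in\{0\}\times\mathbb{Z}^M_+$, \[ b(R,k)=\sum_{0\leq m\leq\min\{k,\tilde{k}\}}\binom{k}{m}\binom{\tilde{k}}{m}(-R)^{\tilde{k}-m}R^{k-m}T^{2m+\mathbb{1}}, \] the sum being over $m\in\mathbb{Z}^{M+1}$.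
   Context: Fix depths $z_{-1}<z_0<\cdots<z_M<z_{M+1}$. The medium consists of positive reals $\tau^\prime=(\tau_0,\ldots,\tau_{M+1})$ ($\tau_j/2$ is the time to traverse between $z_{j-1}$ and $z_j$) and reals $R=(R_0,\ldots,R_M)$ with $-1<R_n<1$; $T_n=\sqrt{1-R_n^2}$, $T=(T_0,\ldots,T_M)$. $\mathbb{Z}_+$ denotes the nonnegative integers. A transmission scattering sequence is a finite sequence $\mathsf{p}=(\mathsf{p}_0,\ldots,\mathsf{p}_L)$ with $\mathsf{p}_0=z_{-1}$, $\mathsf{p}_L=z_{M+1}$, $\mathsf{p}_i\in\{z_0,\ldots,z_M\}$ for $1\le i\le L-1$, and for every $0\le i\le L-1$ there is $-1\le j\le M$ with $\{\mathsf{p}_i,\mathsf{p}_{i+1}\}=\{z_j,z_{j+1}\}$. Its weight is $w(\mathsf{p})=\prod_{i=1}^{L-1}w_i$, where if $\mathsf{p}_i=z_j$: $w_i=R_j$ if $\mathsf{p}_{i-1}=\mathsf{p}_{i+1}=z_{j-1}$; $w_i=-R_j$ if $\mathsf{p}_{i-1}=\mathsf{p}_{i+1}=z_{j+1}$; $w_i=T_j$ otherwise. Its arrival time is $\sigma(\mathsf{p})=\sum_{i=0}^{L-1}\tau_{j_i}/2$ where step $i$ goes between $z_{j_i-1}$ and $z_{j_i}$ ($0\le j_i\le M+1$). The transmission Green's function (velocity impulse response recorded at $z_{M+1}$ for a downward unit plane-wave impulse started at $z_{-1}$) is $H^{(\tau^\prime,R)}(t)=\sum_{\mathsf{p}}w(\mathsf{p})\delta(t-\sigma(\mathsf{p}))$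 over all transmission scattering sequences, terms with equal arrival times combined. Vector conventions: $\tilde{k}=(k_1,\ldots,k_M,0)$; $\mathbb{1}=(1,\ldots,1)$; $\min$ and $\le$ entrywise; $\langle k,\tau\rangle=\sum_{n=0}^M k_n\tau_n$; $s^d=\prod_n s_n^{d_n}$ (with $0^0=1$); $\binom{x}{y}=\prod_n\binom{x_n}{y_n}$. *)

theory Defs
  imports Complex_Main
begin

text \<open>Depth z_j is encoded by the natural number j+1, so positions range over
  0 (= z_{-1}) .. M+2 (= z_{M+1}).  A step between positions a and a+1 is a step
  between z_{a-1} and z_a, traversed in time tau_a / 2.
  tau' :: nat => real (indices 0..M+1), R :: nat => real (indices 0..M).\<close>

definition Tco :: "(nat \<Rightarrow> real) \<Rightarrow> nat \<Rightarrow> real" where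
  "Tco R n = sqrt (1 - (R n)\<^sup>2)"

definition trans_seq :: "nat \<Rightarrow> nat list \<Rightarrow> bool" where
  "trans_seq M p \<longleftrightarrow> length p \<ge> 2 \<and> p ! 0 = 0 \<and> p ! (length p - 1) = M + 2 \<and>
     (\<forall>i. 1 \<le> i \<and> i < length p - 1 \<longrightarrow> 1 \<le> p ! i \<and> p ! i \<le> M + 1) \<and>
     (\<forall>i < length p - 1. p ! (i+1) = p ! i + 1 \<or> p ! i = p ! (i+1) + 1)"

definition step_weight :: "(nat \<Rightarrow> real) \<Rightarrow> nat list \<Rightarrow> nat \<Rightarrow> real" where
  "step_weight R p i =
     (let j = p ! i - 1 in
      if p ! (i - 1) + 1 = p ! i \<and> p ! (i + 1) + 1 = p ! i then R j
      else if p ! (i - 1) = p ! i + 1 \<and> p ! (i + 1) = p ! i + 1 then - R j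
      else Tco R j)"

definition seq_weight :: "(nat \<Rightarrow> real) \<Rightarrow> nat list \<Rightarrow> real" where
  "seq_weight R p = (\<Prod>i \<in> {1..<length p - 1}. step_weight R p i)"

definition arrival :: "(nat \<Rightarrow> real) \<Rightarrow> nat list \<Rightarrow> real" where
  "arrival tau' p = (\<Sum>i < length p - 1. tau' (min (p ! i) (p ! (i+1))) / 2)"

text \<open>Coefficient of delta(t - s) in the transmission Green's function
  (all sequences with arrival time s combined).\<close>
definition greenH :: "nat \<Rightarrow> (nat \<Rightarrow> real) \<Rightarrow> (nat \<Rightarrow> real) \<Rightarrow> real \<Rightarrow> real" where
  "greenH M tau' R s = (\<Sum>p \<in> {p. trans_seq M p \<and> arrival tau' p = s}. seq_weight R p)"

text \<open>Multi-indices k in {0} x Z_+^M, as functions nat => nat supported on 1..M.\<close>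
definition kset :: "nat \<Rightarrow> (nat \<Rightarrow> nat) set" where
  "kset M = {k. k 0 = 0 \<and> (\<forall>n > M. k n = 0)}"

definition ktilde :: "nat \<Rightarrow> (nat \<Rightarrow> nat) \<Rightarrow> nat \<Rightarrow> nat" where
  "ktilde M k n = (if n < M then k (n + 1) else 0)"

definition bcoef :: "nat \<Rightarrow> (nat \<Rightarrow> real) \<Rightarrow> (nat \<Rightarrow> nat) \<Rightarrow> real" where
  "bcoef M R k =
    (\<Sum>m \<in> {m. (\<forall>n \<le> M. m n \<le> min (k n) (ktilde M k n)) \<and> (\<forall>n > M. m n = 0)}.
       \<Prod>n \<le> M. real (k n choose m n) * real (ktilde M k n choose m n)
                 * (- R n) ^ (ktilde M k n - m n) * (R n) ^ (k n - m n)
                 * (Tco R n) ^ (2 * m n + 1))"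

definition rhsH :: "nat \<Rightarrow> (nat \<Rightarrow> real) \<Rightarrow> (nat \<Rightarrow> real) \<Rightarrow> real \<Rightarrow> real" where
  "rhsH M tau' R s =
    (\<Sum>k \<in> {k \<in> kset M. (\<Sum>n \<le> M + 1. tau' n) / 2 + (\<Sum>n \<le> M. real (k n) * tau' n) = s}.
       bcoef M R k)"

end

theory Submission
  imports Defs "HOL-Library.FuncSet"
begin

text \<open>Removing the starting point z_{-1} from a transmission scattering sequence leaves a walk
  from z_0 that is absorbed when it first reaches z_{M+1}. Counting the removed first step, such a
  walk traverses layer n exactly 2 k_n + 1 times for some k with k_0 = k_{M+1} = 0, so its arrival
  time is |tau'|/2 + <k, tau>, and the Green's function groups the walks by k.

  The weight of a walk is a product of coefficients, one per visit of an interface, each depending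
  only on the directions of arrival and departure. A walk on a line is determined by its sequences
  of departure directions at the interfaces, and every choice of such sequences with the prescribed
  numbers of departures, the last one downwards, occurs. Hence the total weight factorises over the
  interfaces; this is proved by checking that both sides satisfy the same first-step recursion. At
  z_n the sequences with k_n upward and k_{n+1} + 1 downward departures, the first arrival being
  from above, have total weight
  sum_m C(k_n, m) C(k_{n+1}, m) R_n^(k_n - m) (-R_n)^(k_{n+1} - m) T_n^(2m+1), which gives b(R,k).\<close>

lemma exists_last_nonzero:
  fixes f :: "nat \<Rightarrow> 'a::zero"
  assumes "f m \<noteq> 0" "f n = 0" "m \<le> n"
  shows "\<exists>l. m \<le> l \<and> l < n \<and> f l \<noteq> 0 \<and> f (Suc l) = 0"
  using assms
proof (induction n)
  case (Suc n)
  show ?case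
  proof (cases "f n = 0")
    case True
    have "m \<le> n" using Suc.prems by (metis le_SucE)
    then obtain l where "m \<le> l" "l < n" "f l \<noteq> 0" "f (Suc l) = 0"
      using Suc.IH Suc.prems(1) True by blast
    then show ?thesis using less_SucI by blast
  qed (use Suc.prems in \<open>auto simp: le_Suc_eq\<close>)
qed simp

lemma sum_fun_upd_decrement_less:
  fixes c :: "'a \<Rightarrow> nat"
  assumes "finite A" "a \<in> A" "0 < c a"
  shows "sum (c(a := c a - 1)) A < sum c A"
proof -
  have "sum (c(a := c a - 1)) A = (c a - 1) + sum c (A - {a})"
    using assms by (simp add: sum.remove)
  also have "\<dots> < sum c A"
    using assms by (simp add: sum.remove)
  finally show ?thesis .
qed

section \<open>A single interface\<close>

text \<open>Visits of one interface with coefficients r and t: \<open>from_above\<close> tells whether the next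
  arrival comes from above, u and d are the remaining numbers of upward and downward departures.
  The last departure is downwards.\<close>

fun interface_weight :: "real \<Rightarrow> real \<Rightarrow> bool \<Rightarrow> nat \<Rightarrow> nat \<Rightarrow> real" where
  "interface_weight r t from_above u 0 = (if u = 0 then 1 else 0)"
| "interface_weight r t from_above u (Suc d) =
     (if u > 0 then (if from_above then r else t) * interface_weight r t True (u - 1) (Suc d) else 0)
     + (if from_above then t else - r) * interface_weight r t False u d"

declare interface_weight.simps(2) [simp del]

definition above_closed_form :: "real \<Rightarrow> real \<Rightarrow> nat \<Rightarrow> nat \<Rightarrow> real" where
  "above_closed_form r t q j =
     (\<Sum>m\<le>q. real (q choose m) * real (j choose m) * r ^ (q - m) * (- r) ^ (j - m) * t ^ (2*m+1))"

definition below_closed_form :: "real \<Rightarrow> real \<Rightarrow> nat \<Rightarrow> nat \<Rightarrow> real" where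
  "below_closed_form r t q j =
     (\<Sum>m\<le>q. real (q choose m) * real (j choose Suc m) * r ^ (q - m) * (- r) ^ (j - Suc m) * t ^ (2*m+2))"

lemma above_closed_form_Suc:
  "above_closed_form r t (Suc p) j = r * above_closed_form r t p j + t * below_closed_form r t p j"
proof -
  define X where "X m = r ^ (Suc p - m) * (- r) ^ (j - m) * t ^ (2*m+1)" for m
  have "above_closed_form r t (Suc p) j = (\<Sum>m\<le>Suc p. real (Suc p choose m) * real (j choose m) * X m)"
    unfolding above_closed_form_def X_def by (simp add: mult_ac)
  also have "\<dots> = (\<Sum>m\<le>Suc p. real (p choose m) * real (j choose m) * X m)
      + (\<Sum>m\<le>p. real (p choose m) * real (j choose Suc m) * X (Suc m))"
    by (simp add: sum.atMost_Suc_shift sum.distrib algebra_simps del: sum.atMost_Suc)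
  also have "(\<Sum>m\<le>Suc p. real (p choose m) * real (j choose m) * X m) = r * above_closed_form r t p j"
    unfolding above_closed_form_def X_def sum_distrib_left by (simp add: Suc_diff_le mult_ac)
  also have "(\<Sum>m\<le>p. real (p choose m) * real (j choose Suc m) * X (Suc m)) = t * below_closed_form r t p j"
    unfolding below_closed_form_def X_def sum_distrib_left by (intro sum.cong) (auto simp: mult_ac)
  finally show ?thesis .
qed

lemma below_closed_form_Suc:
  "below_closed_form r t q (Suc i) = t * above_closed_form r t q i - r * below_closed_form r t q i"
  unfolding above_closed_form_def below_closed_form_def sum_distrib_left sum_subtractf[symmetric]
proof (rule sum.cong[OF refl])
  fix m
  consider "m < i" | "m = i" | "i < m" by linarith
  then show "real (q choose m) * real (Suc i choose Suc m) * r ^ (q - m) * (- r) ^ (Suc i - Suc m) * t ^ (2 * m + 2)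
    = t * (real (q choose m) * real (i choose m) * r ^ (q - m) * (- r) ^ (i - m) * t ^ (2 * m + 1))
      - r * (real (q choose m) * real (i choose Suc m) * r ^ (q - m) * (- r) ^ (i - Suc m) * t ^ (2 * m + 2))"
  proof cases
    case 1
    then have "(- r) ^ (i - m) = (- r) * (- r) ^ (i - Suc m)"
      by (metis Suc_diff_Suc power_Suc)
    then show ?thesis by (simp add: algebra_simps)
  qed (simp_all add: algebra_simps binomial_eq_0)
qed

lemma interface_weight_from_below_0: "interface_weight r t False 0 j = (- r) ^ j"
  by (induction j) (auto simp: interface_weight.simps(2))

lemma interface_weight_closed_forms:
  "interface_weight r t True q (Suc j) = above_closed_form r t q j
   \<and> interface_weight r t False (Suc q) j = below_closed_form r t q j"
proof (induction "q + j" arbitrary: q j rule: less_induct)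
  case less
  have "interface_weight r t True q (Suc j) = above_closed_form r t q j"
  proof (cases q)
    case 0
    then show ?thesis by (simp add: above_closed_form_def interface_weight_from_below_0 interface_weight.simps(2))
  next
    case (Suc p)
    then show ?thesis using less[of p j] by (simp add: above_closed_form_Suc interface_weight.simps(2))
  qed
  moreover have "interface_weight r t False (Suc q) j = below_closed_form r t q j"
  proof (cases j)
    case 0
    then show ?thesis by (simp add: below_closed_form_def)
  next
    case (Suc i)
    then show ?thesis using less[of q i] by (simp add: below_closed_form_Suc interface_weight.simps(2))
  qed
  ultimately show ?case ..
qed


section \<open>Absorbed walks\<close>

text \<open>Positions are numbered as in \<open>trans_seq\<close>, so layer l lies between positions l and l + 1,
  and \<open>crossings q l\<close> counts the traversals of layer l.\<close>

fun absorbed_walk :: "nat \<Rightarrow> nat list \<Rightarrow> bool" where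
  "absorbed_walk M [] = False"
| "absorbed_walk M [x] = (x = M + 2)"
| "absorbed_walk M (x # y # r) =
     (1 \<le> x \<and> x \<le> M + 1 \<and> (y = x + 1 \<or> x = y + 1) \<and> absorbed_walk M (y # r))"

fun crossings :: "nat list \<Rightarrow> nat \<Rightarrow> nat" where
  "crossings (x # y # r) = (\<lambda>l. (if l = min x y then 1 else 0) + crossings (y # r) l)"
| "crossings _ = (\<lambda>l. 0)"

definition absorbed_walks :: "nat \<Rightarrow> nat \<Rightarrow> (nat \<Rightarrow> nat) \<Rightarrow> nat list set" where
  "absorbed_walks M a c = {q. absorbed_walk M q \<and> hd q = a \<and> crossings q = c}"

lemma absorbed_walk_set: "absorbed_walk M q \<Longrightarrow> set q \<subseteq> {..M+2}"
  by (induction M q rule: absorbed_walk.induct) auto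

lemma absorbed_walk_length: "absorbed_walk M q \<Longrightarrow> length q = Suc (\<Sum>l\<le>M+1. crossings q l)"
proof (induction M q rule: absorbed_walk.induct)
  case (3 M x y r)
  then have "min x y \<le> M + 1" by auto
  then show ?case using 3 by (simp add: sum.distrib)
qed auto

lemma finite_absorbed_walks: "finite (absorbed_walks M a c)"
proof (rule finite_subset)
  show "absorbed_walks M a c \<subseteq> {q. set q \<subseteq> {..M+2} \<and> length q = Suc (\<Sum>l\<le>M+1. c l)}"
    unfolding absorbed_walks_def using absorbed_walk_set absorbed_walk_length by blast
qed (rule finite_lists_length_eq, simp)

lemma absorbed_walks_hd: "q \<in> absorbed_walks M a c \<Longrightarrow> \<exists>r. q = a # r"
  unfolding absorbed_walks_def by (cases q) auto

lemma crossings_Cons_Cons_eq: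
  "crossings (x # y # r) = c \<longleftrightarrow>
     0 < c (min x y) \<and> crossings (y # r) = c(min x y := c (min x y) - 1)"
  by (auto simp: fun_eq_iff split: if_splits)

lemma Cons_Cons_in_absorbed_walks:
  "x # y # r \<in> absorbed_walks M a c \<longleftrightarrow>
     x = a \<and> 1 \<le> a \<and> a \<le> M + 1 \<and> (y = a + 1 \<or> a = y + 1) \<and> 0 < c (min a y) \<and>
     y # r \<in> absorbed_walks M y (c(min a y := c (min a y) - 1))"
  by (auto simp: absorbed_walks_def crossings_Cons_Cons_eq)

lemma absorbed_walks_bottom:
  "absorbed_walks M (M + 2) c = (if c = (\<lambda>_. 0) then {[M + 2]} else {})"
proof -
  have "q \<in> absorbed_walks M (M + 2) c \<longleftrightarrow> q = [M + 2] \<and> c = (\<lambda>_. 0)" for q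
    by (cases "(M, q)" rule: absorbed_walk.cases) (auto simp: absorbed_walks_def)
  then show ?thesis by auto
qed

lemma absorbed_walks_step:
  assumes "1 \<le> a" "a \<le> M + 1"
  shows "absorbed_walks M a c =
     (if 0 < c a then (#) a ` absorbed_walks M (a + 1) (c(a := c a - 1)) else {}) \<union>
     (if 0 < c (a - 1) then (#) a ` absorbed_walks M (a - 1) (c(a - 1 := c (a - 1) - 1)) else {})"
    (is "_ = ?A \<union> ?B")
proof (rule set_eqI)
  fix p
  show "p \<in> absorbed_walks M a c \<longleftrightarrow> p \<in> ?A \<union> ?B"
  proof (cases p rule: crossings.cases)
    case (1 x y r)
    have "p \<in> ?A \<longleftrightarrow> x = a \<and> y = a + 1 \<and> 0 < c a \<and> y # r \<in> absorbed_walks M y (c(a := c a - 1))"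
      using 1 absorbed_walks_hd[of "y # r" M "a + 1" "c(a := c a - 1)"] by auto
    moreover have "p \<in> ?B \<longleftrightarrow> x = a \<and> a = y + 1 \<and> 0 < c (a - 1) \<and>
        y # r \<in> absorbed_walks M y (c(a - 1 := c (a - 1) - 1))"
      using 1 absorbed_walks_hd[of "y # r" M "a - 1" "c(a - 1 := c (a - 1) - 1)"] assms by auto
    moreover have "p \<in> absorbed_walks M a c \<longleftrightarrow> x = a \<and>
        (y = a + 1 \<and> 0 < c a \<and> y # r \<in> absorbed_walks M y (c(a := c a - 1)) \<or>
         a = y + 1 \<and> 0 < c (a - 1) \<and> y # r \<in> absorbed_walks M y (c(a - 1 := c (a - 1) - 1)))"
      using 1 assms by (auto simp: Cons_Cons_in_absorbed_walks min_def)
    ultimately show ?thesis by blast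
  qed (use assms absorbed_walks_hd in \<open>auto simp: absorbed_walks_def\<close>)
qed

lemma step_weight_Cons: "1 \<le> i \<Longrightarrow> step_weight R (x # p) (Suc i) = step_weight R p i"
  by (cases i) (simp_all add: step_weight_def Let_def)

lemma seq_weight_Cons:
  "seq_weight R (x # y # z # r) = step_weight R [x, y, z] 1 * seq_weight R (y # z # r)"
proof -
  let ?p = "x # y # z # r"
  have "seq_weight R ?p = (\<Prod>i\<in>{1..<Suc (Suc (length r))}. step_weight R ?p i)"
    unfolding seq_weight_def by simp
  also have "\<dots> = step_weight R ?p 1 * (\<Prod>i\<in>{Suc 1..<Suc (Suc (length r))}. step_weight R ?p i)"
    by (rule prod.atLeast_Suc_lessThan) simp
  also have "(\<Prod>i\<in>{Suc 1..<Suc (Suc (length r))}. step_weight R ?p i)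
      = (\<Prod>i\<in>{1..<Suc (length r)}. step_weight R (y # z # r) i)"
    unfolding prod.shift_bounds_Suc_ivl by (intro prod.cong refl step_weight_Cons) simp
  also have "\<dots> = seq_weight R (y # z # r)"
    unfolding seq_weight_def by simp
  finally show ?thesis by (simp add: step_weight_def Let_def)
qed

lemma sum_seq_weight_image_Cons:
  "(\<Sum>q\<in>(#) a ` absorbed_walks M b c. seq_weight R (prev # q))
     = step_weight R [prev, a, b] 1 * (\<Sum>q\<in>absorbed_walks M b c. seq_weight R (a # q))"
  unfolding sum_distrib_left sum.reindex[OF inj_on_Cons1]
  by (intro sum.cong refl) (auto dest!: absorbed_walks_hd simp: seq_weight_Cons)

lemma sum_seq_weight_step:
  assumes "1 \<le> a" "a \<le> M + 1"
  shows "(\<Sum>q\<in>absorbed_walks M a c. seq_weight R (prev # q)) =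
     (if 0 < c a then step_weight R [prev, a, a + 1] 1 *
        (\<Sum>q\<in>absorbed_walks M (a + 1) (c(a := c a - 1)). seq_weight R (a # q)) else 0) +
     (if 0 < c (a - 1) then step_weight R [prev, a, a - 1] 1 *
        (\<Sum>q\<in>absorbed_walks M (a - 1) (c(a - 1 := c (a - 1) - 1)). seq_weight R (a # q)) else 0)"
proof -
  have "(#) a ` absorbed_walks M (a + 1) c' \<inter> (#) a ` absorbed_walks M (a - 1) c'' = {}" for c' c''
    using assms by (auto dest!: absorbed_walks_hd)
  then show ?thesis
    unfolding absorbed_walks_step[OF assms]
    by (subst sum.union_disjoint) (auto simp: finite_absorbed_walks sum_seq_weight_image_Cons)
qed

section \<open>Factorisation over the interfaces\<close>

text \<open>The crossing numbers of a walk from a absorbed at M + 2: the layers below a are traversed an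
  odd number of times, those above it an even number of times, the last one at most once.\<close>

definition feasible_crossings :: "nat \<Rightarrow> nat \<Rightarrow> (nat \<Rightarrow> nat) \<Rightarrow> bool" where
  "feasible_crossings M a c \<longleftrightarrow> 1 \<le> a \<and> a \<le> M + 2 \<and> c 0 = 0 \<and> (\<forall>l > M + 1. c l = 0) \<and>
     c (M + 1) \<le> 1 \<and> (\<forall>l. 1 \<le> l \<and> l \<le> M + 1 \<longrightarrow> (odd (c l) \<longleftrightarrow> a \<le> l))"

text \<open>Whichever side of b the walk is on, it leaves b upwards \<open>c (b - 1) div 2\<close> times and
  downwards \<open>(c b + 1) div 2\<close> times. Its next arrival at b is from above iff it is above b or,
  sitting at b, arrived there from above (d).\<close>

definition interface_factor :: "(nat \<Rightarrow> real) \<Rightarrow> nat \<Rightarrow> bool \<Rightarrow> (nat \<Rightarrow> nat) \<Rightarrow> nat \<Rightarrow> real" where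
  "interface_factor R a d c b =
     interface_weight (R (b - 1)) (Tco R (b - 1)) (if b = a then d else a < b)
       (c (b - 1) div 2) ((c b + 1) div 2)"

definition interface_product :: "nat \<Rightarrow> (nat \<Rightarrow> real) \<Rightarrow> nat \<Rightarrow> bool \<Rightarrow> (nat \<Rightarrow> nat) \<Rightarrow> real" where
  "interface_product M R a d c = (\<Prod>b\<in>{1..M+1}. interface_factor R a d c b)"

lemma feasible_crossings_step_down:
  assumes "feasible_crossings M a c" "a \<le> M + 1"
  shows "feasible_crossings M (a + 1) (c(a := c a - 1))"
proof -
  have "odd (c a)" using assms by (simp add: feasible_crossings_def)
  then have "odd (c a - 1) \<longleftrightarrow> False" by (cases "c a") auto
  then show ?thesis using assms unfolding feasible_crossings_def by auto
qed

lemma feasible_crossings_step_up: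
  assumes "feasible_crossings M a c" "a \<le> M + 1" "0 < c (a - 1)"
  shows "feasible_crossings M (a - 1) (c(a - 1 := c (a - 1) - 1))"
proof -
  have a: "2 \<le> a" using assms by (cases a) (auto simp: feasible_crossings_def)
  moreover have "1 \<le> a - 1 \<and> a - 1 \<le> M + 1" using a assms(2) by arith
  ultimately have "odd (c (a - 1)) \<longleftrightarrow> a \<le> a - 1"
    using assms(1) unfolding feasible_crossings_def by blast
  then have "odd (c (a - 1) - 1)" using a assms(3) by (cases "c (a - 1)") auto
  then show ?thesis using assms a unfolding feasible_crossings_def by auto
qed

lemma interface_factor_step_down_other:
  assumes "odd (c a)" "b \<noteq> a"
  shows "interface_factor R (a + 1) True (c(a := c a - 1)) b = interface_factor R a d c b"
proof -
  have "(c a - 1) div 2 = c a div 2" using assms(1) by (auto elim!: oddE)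
  moreover have "(if b = a + 1 then True else a + 1 < b) = (if b = a then d else a < b)"
    using assms(2) by auto
  ultimately show ?thesis using assms(2) unfolding interface_factor_def by auto
qed

lemma interface_factor_step_up_other:
  assumes "even (c (a - 1))" "0 < c (a - 1)" "2 \<le> a" "b \<noteq> a"
  shows "interface_factor R (a - 1) False (c(a - 1 := c (a - 1) - 1)) b = interface_factor R a d c b"
proof -
  have "(c (a - 1) - 1 + 1) div 2 = (c (a - 1) + 1) div 2" using assms(1,2) by (auto elim!: evenE)
  moreover have "b - 1 \<noteq> a - 1" using assms(3,4) by arith
  moreover have "(if b = a - 1 then False else a - 1 < b) = (if b = a then d else a < b)"
    using assms(3,4) by auto
  ultimately show ?thesis unfolding interface_factor_def by auto
qed

lemma interface_product_remove:
  assumes "1 \<le> b" "b \<le> M + 1"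
  shows "interface_product M R a d c =
    interface_factor R a d c b * (\<Prod>b'\<in>{1..M+1} - {b}. interface_factor R a d c b')"
  unfolding interface_product_def using assms by (intro prod.remove) auto

lemma interface_product_step_down:
  assumes "odd (c a)" "1 \<le> a" "a \<le> M + 1"
  shows "interface_product M R (a + 1) True (c(a := c a - 1)) =
    interface_weight (R (a - 1)) (Tco R (a - 1)) False (c (a - 1) div 2) (c a div 2)
    * (\<Prod>b\<in>{1..M+1} - {a}. interface_factor R a d c b)"
proof -
  have "(\<Prod>b\<in>{1..M+1} - {a}. interface_factor R (a + 1) True (c(a := c a - 1)) b)
      = (\<Prod>b\<in>{1..M+1} - {a}. interface_factor R a d c b)"
    using assms(1) by (intro prod.cong refl interface_factor_step_down_other) auto
  moreover have "(c(a := c a - 1)) (a - 1) = c (a - 1)" "((c a - 1) + 1) div 2 = c a div 2"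
    using assms(1,2) by (auto elim!: oddE)
  ultimately show ?thesis
    using assms(2,3) by (simp add: interface_product_remove[of a] interface_factor_def)
qed

lemma interface_product_step_up:
  assumes "even (c (a - 1))" "0 < c (a - 1)" "odd (c a)" "2 \<le> a" "a \<le> M + 1"
  shows "interface_product M R (a - 1) False (c(a - 1 := c (a - 1) - 1)) =
    interface_weight (R (a - 1)) (Tco R (a - 1)) True (c (a - 1) div 2 - 1) (Suc (c a div 2))
    * (\<Prod>b\<in>{1..M+1} - {a}. interface_factor R a d c b)"
proof -
  have "(\<Prod>b\<in>{1..M+1} - {a}. interface_factor R (a - 1) False (c(a - 1 := c (a - 1) - 1)) b)
      = (\<Prod>b\<in>{1..M+1} - {a}. interface_factor R a d c b)"
    using assms(1,2,4) by (intro prod.cong refl interface_factor_step_up_other) auto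
  moreover have "(c (a - 1) - 1) div 2 = c (a - 1) div 2 - 1" "(c a + 1) div 2 = Suc (c a div 2)"
    using assms(1,2,3) by (auto elim!: evenE oddE)
  moreover have "a \<noteq> a - 1" "\<not> a < a - 1" using assms(4) by arith+
  ultimately show ?thesis
    using assms(4,5) by (simp add: interface_product_remove[of a] interface_factor_def)
qed

lemma interface_product_step:
  assumes cs: "feasible_crossings M a c" and aM: "a \<le> M + 1"
  shows "interface_product M R a d c =
     (if 0 < c a then (if d then Tco R (a - 1) else - R (a - 1)) *
        interface_product M R (a + 1) True (c(a := c a - 1)) else 0) +
     (if 0 < c (a - 1) then (if d then R (a - 1) else Tco R (a - 1)) *
        interface_product M R (a - 1) False (c(a - 1 := c (a - 1) - 1)) else 0)"
proof -
  let ?W = "interface_weight (R (a - 1)) (Tco R (a - 1))"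
  define u where "u = c (a - 1) div 2"
  define v where "v = c a div 2"
  define P where "P = (\<Prod>b\<in>{1..M+1} - {a}. interface_factor R a d c b)"
  have a1: "1 \<le> a" and oa: "odd (c a)" using cs aM by (auto simp: feasible_crossings_def)
  then have "(c a + 1) div 2 = Suc v" unfolding v_def by (auto elim!: oddE)
  then have "interface_product M R a d c = ?W d u (Suc v) * P"
    using a1 aM unfolding P_def u_def by (simp add: interface_product_remove[of a] interface_factor_def)
  also have "?W d u (Suc v) =
      (if u > 0 then (if d then R (a - 1) else Tco R (a - 1)) * ?W True (u - 1) (Suc v) else 0)
       + (if d then Tco R (a - 1) else - R (a - 1)) * ?W False u v"
    by (rule interface_weight.simps(2))
  finally have here: "interface_product M R a d c =
      ((if u > 0 then (if d then R (a - 1) else Tco R (a - 1)) * ?W True (u - 1) (Suc v) else 0)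
       + (if d then Tco R (a - 1) else - R (a - 1)) * ?W False u v) * P" .
  have down: "interface_product M R (a + 1) True (c(a := c a - 1)) = ?W False u v * P"
    unfolding u_def v_def P_def using oa a1 aM by (rule interface_product_step_down)
  have "0 < c a" using oa by (auto elim!: oddE)
  show ?thesis
  proof (cases "0 < c (a - 1)")
    case False
    then show ?thesis using here down \<open>0 < c a\<close> by (simp add: u_def)
  next
    case True
    have a2: "2 \<le> a" using cs True by (cases a) (auto simp: feasible_crossings_def)
    have "1 \<le> a - 1 \<and> a - 1 \<le> M + 1" using a2 aM by arith
    then have "odd (c (a - 1)) \<longleftrightarrow> a \<le> a - 1" using cs unfolding feasible_crossings_def by blast
    moreover have "\<not> a \<le> a - 1" using a2 by arith
    ultimately have ea: "even (c (a - 1))" by simp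
    then have "0 < u" unfolding u_def using True by (auto elim!: evenE)
    moreover have "interface_product M R (a - 1) False (c(a - 1 := c (a - 1) - 1)) = ?W True (u - 1) (Suc v) * P"
      unfolding u_def v_def P_def using ea True oa a2 aM by (rule interface_product_step_up)
    ultimately show ?thesis using here down \<open>0 < c a\<close> True by (simp add: algebra_simps)
  qed
qed

lemma interface_product_bottom:
  assumes "feasible_crossings M (M + 2) c"
  shows "interface_product M R (M + 2) d c = (if c = (\<lambda>_. 0) then 1 else 0)"
proof (cases "c = (\<lambda>_. 0)")
  case True
  then show ?thesis by (simp add: interface_product_def interface_factor_def)
next
  case False
  then obtain m where m: "c m \<noteq> 0" by auto
  have c: "c 0 = 0" "\<And>l. M + 1 < l \<Longrightarrow> c l = 0" "c (M + 1) \<le> 1"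
    "\<And>l. 1 \<le> l \<Longrightarrow> l \<le> M + 1 \<Longrightarrow> even (c l)"
    using assms by (auto simp: feasible_crossings_def)
  have "even (c (M + 1))" using c(4) by simp
  then have "c (M + 1) = 0" using c(3) by (cases "c (M + 1)") auto
  moreover have "m \<le> M + 1" using m c(2) by (meson not_le)
  ultimately obtain l where l: "m \<le> l" "l < M + 1" "c l \<noteq> 0" "c (Suc l) = 0"
    using exists_last_nonzero[of c m "M + 1"] m by auto
  have "1 \<le> l" using l(3) c(1) by (cases l) auto
  then have "0 < c l div 2" using l c(4)[of l] by (auto elim!: evenE)
  then have "interface_factor R (M + 2) d c (Suc l) = 0"
    using l(4) by (simp add: interface_factor_def)
  then have "interface_product M R (M + 2) d c = 0"
    unfolding interface_product_def using l(2) by (intro prod_zero) auto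
  then show ?thesis using False by simp
qed

lemma step_weight_transmit_or_reflect:
  assumes "1 \<le> a" "prev + 1 = a \<or> prev = a + 1"
  shows "step_weight R [prev, a, a + 1] 1 = (if prev + 1 = a then Tco R (a - 1) else - R (a - 1))"
    and "step_weight R [prev, a, a - 1] 1 = (if prev + 1 = a then R (a - 1) else Tco R (a - 1))"
  using assms by (auto simp: step_weight_def Let_def)

lemma sum_seq_weight_absorbed_walks:
  assumes "feasible_crossings M a c" "prev + 1 = a \<or> prev = a + 1"
  shows "(\<Sum>q\<in>absorbed_walks M a c. seq_weight R (prev # q)) = interface_product M R a (prev + 1 = a) c"
  using assms
proof (induction "sum c {..M+1}" arbitrary: a prev c rule: less_induct)
  case less
  show ?case
  proof (cases "a = M + 2")
    case True
    have "seq_weight R [prev, M + 2] = 1" by (simp add: seq_weight_def)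
    then show ?thesis
      unfolding True absorbed_walks_bottom interface_product_bottom[OF less.prems(1)[unfolded True]]
      by simp
  next
    case False
    then have a: "1 \<le> a" "a \<le> M + 1" "odd (c a)"
      using less.prems(1) by (auto simp: feasible_crossings_def)
    have "sum (c(a := c a - 1)) {..M+1} < sum c {..M+1}"
      using a by (intro sum_fun_upd_decrement_less) (auto elim!: oddE)
    from less.hyps[OF this feasible_crossings_step_down[OF less.prems(1) a(2)] disjI1[OF refl]]
    have down: "(\<Sum>q\<in>absorbed_walks M (a + 1) (c(a := c a - 1)). seq_weight R (a # q))
        = interface_product M R (a + 1) True (c(a := c a - 1))"
      by simp
    have up: "(\<Sum>q\<in>absorbed_walks M (a - 1) (c(a - 1 := c (a - 1) - 1)). seq_weight R (a # q))
        = interface_product M R (a - 1) False (c(a - 1 := c (a - 1) - 1))" if pos: "0 < c (a - 1)"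
    proof -
      have "sum (c(a - 1 := c (a - 1) - 1)) {..M+1} < sum c {..M+1}"
        using a pos by (intro sum_fun_upd_decrement_less) auto
      from less.hyps[OF this feasible_crossings_step_up[OF less.prems(1) a(2) pos] disjI2[OF refl]]
      moreover have "(a + 1 = a - 1) = False" by arith
      ultimately show ?thesis using a(1) by simp
    qed
    show ?thesis
      unfolding sum_seq_weight_step[OF a(1,2)] interface_product_step[OF less.prems(1) a(2)]
        step_weight_transmit_or_reflect[OF a(1) less.prems(2)]
      using down up by simp
  qed
qed

section \<open>Transmission scattering sequences\<close>

lemma absorbed_walk_iff_nth:
  "absorbed_walk M q \<longleftrightarrow> q \<noteq> [] \<and> last q = M + 2 \<and>
     (\<forall>i < length q - 1. 1 \<le> q ! i \<and> q ! i \<le> M + 1 \<and>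
        (q ! (i + 1) = q ! i + 1 \<or> q ! i = q ! (i + 1) + 1))"
proof (induction M q rule: absorbed_walk.induct)
  case (3 M x y r)
  show ?case unfolding absorbed_walk.simps(3) "3" by (simp add: All_less_Suc2) blast
qed auto

lemma trans_seq_iff_absorbed_walk:
  "trans_seq M p \<longleftrightarrow> (\<exists>q. p = 0 # q \<and> hd q = 1 \<and> absorbed_walk M q)"
proof (cases p rule: crossings.cases)
  case (1 x y r)
  have interior: "(\<forall>i. 1 \<le> i \<and> i < Suc n \<longrightarrow> P i) \<longleftrightarrow> (\<forall>i < n. P (Suc i))" for n and P :: "nat \<Rightarrow> bool"
  proof
    assume P: "\<forall>i<n. P (Suc i)"
    show "\<forall>i. 1 \<le> i \<and> i < Suc n \<longrightarrow> P i"
    proof (intro allI impI)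
      fix i assume "1 \<le> i \<and> i < Suc n"
      then obtain j where "i = Suc j" "j < n" by (cases i) auto
      then show "P i" using P by simp
    qed
  qed simp
  have "trans_seq M p \<longleftrightarrow> x = 0 \<and> last (y # r) = M + 2 \<and>
      (\<forall>i < length r. 1 \<le> (y # r) ! i \<and> (y # r) ! i \<le> M + 1) \<and>
      (y = x + 1 \<or> x = y + 1) \<and>
      (\<forall>i < length r. (y # r) ! (i + 1) = (y # r) ! i + 1 \<or> (y # r) ! i = (y # r) ! (i + 1) + 1)"
    unfolding 1 trans_seq_def by (simp add: interior All_less_Suc2 last_conv_nth del: One_nat_def)
  also have "\<dots> \<longleftrightarrow> x = 0 \<and> y = 1 \<and> absorbed_walk M (y # r)"
    unfolding absorbed_walk_iff_nth by auto
  finally show ?thesis using 1 by simp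
qed (auto simp: trans_seq_def)

lemma absorbed_walk_feasible_crossings:
  "absorbed_walk M q \<Longrightarrow> feasible_crossings M (hd q) (crossings q)"
proof (induction M q rule: absorbed_walk.induct)
  case (3 M x y r)
  define c where "c = crossings (y # r)"
  define m where "m = min x y"
  have x: "1 \<le> x" "x \<le> M + 1" "y = x + 1 \<or> x = y + 1" using "3.prems" by auto
  then have c: "1 \<le> y" "c 0 = 0" "\<forall>l > M + 1. c l = 0" "c (M + 1) \<le> 1"
    "\<forall>l. 1 \<le> l \<and> l \<le> M + 1 \<longrightarrow> (odd (c l) \<longleftrightarrow> y \<le> l)"
    using 3 unfolding c_def feasible_crossings_def by simp_all
  have m: "1 \<le> m" "m \<le> M + 1" using x c(1) unfolding m_def by auto
  have parity: "odd ((c(m := Suc (c m))) l) \<longleftrightarrow> x \<le> l" if "1 \<le> l" "l \<le> M + 1" for l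
    using c(5) that x unfolding m_def by (cases "l = min x y") auto
  have last: "(c(m := Suc (c m))) (M + 1) \<le> 1"
  proof (cases "m = M + 1")
    case True
    then have "even (c (M + 1))" using c(5) x unfolding m_def by auto
    then have "c (M + 1) = 0" using c(4) by presburger
    then show ?thesis using True by simp
  qed (use c(4) in simp)
  have upd: "crossings (x # y # r) = c(m := Suc (c m))"
    unfolding c_def m_def by (simp add: fun_eq_iff)
  show ?case
    unfolding feasible_crossings_def list.sel(1) upd
  proof (intro conjI allI impI)
    show "(c(m := Suc (c m))) 0 = 0" using m c(2) by simp
    show "(c(m := Suc (c m))) l = 0" if "M + 1 < l" for l using m c(3) that by simp
  qed (use x last parity in auto)
qed (auto simp: feasible_crossings_def)

lemma arrival_Cons_Cons: "arrival tau' (x # y # r) = tau' (min x y) / 2 + arrival tau' (y # r)"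
  unfolding arrival_def by (simp add: sum.lessThan_Suc_shift del: sum.lessThan_Suc)

lemma arrival_eq_sum_crossings:
  "set p \<subseteq> {..N} \<Longrightarrow> arrival tau' p = (\<Sum>l\<le>N. real (crossings p l) * tau' l) / 2"
proof (induction p rule: crossings.induct)
  case (1 x y r)
  have "(\<Sum>l\<le>N. real (crossings (x # y # r) l) * tau' l)
      = (\<Sum>l\<le>N. (if l = min x y then tau' l else 0) + real (crossings (y # r) l) * tau' l)"
    by (intro sum.cong) (auto simp: algebra_simps)
  also have "\<dots> = tau' (min x y) + (\<Sum>l\<le>N. real (crossings (y # r) l) * tau' l)"
    using "1.prems" by (simp add: sum.distrib min.coboundedI1)
  finally show ?case using 1 by (simp add: arrival_Cons_Cons)
qed (auto simp: arrival_def)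

text \<open>Crossing numbers of an absorbed walk from z_0 with multi-index k. Layer 0 is traversed only by
  the initial step from z_{-1}, which is not part of the walk.\<close>

definition crossing_vector :: "nat \<Rightarrow> (nat \<Rightarrow> nat) \<Rightarrow> nat \<Rightarrow> nat" where
  "crossing_vector M k l = (if 1 \<le> l \<and> l \<le> M then 2 * k l + 1 else if l = M + 1 then 1 else 0)"

lemma feasible_crossings_from_top_iff:
  "feasible_crossings M 1 c \<longleftrightarrow> (\<exists>k\<in>kset M. c = crossing_vector M k)"
proof
  assume c: "feasible_crossings M 1 c"
  define k where "k l = (if 1 \<le> l \<and> l \<le> M then c l div 2 else 0)" for l
  have "c l = crossing_vector M k l" for l
  proof -
    have "1 \<le> l \<Longrightarrow> l \<le> M + 1 \<Longrightarrow> odd (c l)" "c (M + 1) \<le> 1" "c 0 = 0" "M + 1 < l \<Longrightarrow> c l = 0"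
      using c unfolding feasible_crossings_def by auto
    then show ?thesis unfolding crossing_vector_def k_def
      by (cases "l = 0"; cases "l \<le> M"; cases "l = M + 1") (auto elim!: oddE)
  qed
  moreover have "k \<in> kset M" by (simp add: k_def kset_def)
  ultimately show "\<exists>k\<in>kset M. c = crossing_vector M k" by blast
qed (auto simp: feasible_crossings_def crossing_vector_def split: if_splits)

lemma inj_on_crossing_vector: "inj_on (crossing_vector M) (kset M)"
proof (rule inj_onI)
  fix k k' assume k: "k \<in> kset M" "k' \<in> kset M" and eq: "crossing_vector M k = crossing_vector M k'"
  show "k = k'"
  proof
    fix l
    show "k l = k' l"
      using k fun_cong[OF eq, of l] unfolding kset_def crossing_vector_def
      by (cases "l = 0"; cases "l \<le> M") auto
  qed
qed

lemma arrival_absorbed_walk: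
  assumes "absorbed_walk M q" "hd q = 1" "k \<in> kset M" "crossings q = crossing_vector M k"
  shows "arrival tau' (0 # q) = (\<Sum>n\<le>M + 1. tau' n) / 2 + (\<Sum>n\<le>M. real (k n) * tau' n)"
proof -
  obtain r where q: "q = 1 # r" using assms(1,2) by (cases q) auto
  have k: "k 0 = 0" "k (M + 1) = 0" using assms(3) by (auto simp: kset_def)
  have "crossings (0 # q) l = (if l \<le> M + 1 then 2 * k l + 1 else 0)" for l
    using assms(4) k unfolding q by (auto simp: crossing_vector_def)
  moreover have "set (0 # q) \<subseteq> {..M + 1 + 1}" using absorbed_walk_set[OF assms(1)] by auto
  ultimately have "arrival tau' (0 # q) = (\<Sum>l\<le>M + 1 + 1. (if l \<le> M + 1 then real (2 * k l + 1) * tau' l else 0)) / 2"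
    by (simp add: arrival_eq_sum_crossings if_distrib[of real] cong: if_cong)
  also have "\<dots> = (\<Sum>l\<le>M + 1. tau' l + 2 * (real (k l) * tau' l)) / 2"
    by (simp add: algebra_simps)
  also have "\<dots> = (\<Sum>n\<le>M + 1. tau' n) / 2 + (\<Sum>n\<le>M + 1. real (k n) * tau' n)"
    by (simp add: sum.distrib sum_distrib_left[symmetric] add_divide_distrib)
  finally show ?thesis using k(2) by simp
qed

section \<open>The coefficients b(R, k)\<close>

lemma interface_factor_crossing_vector:
  assumes "k \<in> kset M" "n \<le> M"
  shows "interface_factor R 1 True (crossing_vector M k) (Suc n)
    = above_closed_form (R n) (Tco R n) (k n) (ktilde M k n)"
proof -
  have "crossing_vector M k n div 2 = k n"
    using assms by (cases "n = 0") (auto simp: crossing_vector_def kset_def)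
  moreover have "(crossing_vector M k (Suc n) + 1) div 2 = Suc (ktilde M k n)"
    using assms(2) by (auto simp: crossing_vector_def ktilde_def)
  ultimately show ?thesis
    by (simp add: interface_factor_def interface_weight_closed_forms)
qed

lemma above_closed_form_eq_sum_min:
  "above_closed_form r t q j = (\<Sum>m\<le>min q j.
     real (q choose m) * real (j choose m) * (- r) ^ (j - m) * r ^ (q - m) * t ^ (2 * m + 1))"
  unfolding above_closed_form_def
  by (rule sum.mono_neutral_cong_right) (auto simp: mult_ac)

lemma bcoef_eq_interface_product:
  assumes k: "k \<in> kset M"
  shows "bcoef M R k = interface_product M R 1 True (crossing_vector M k)"
proof -
  define B where "B n = min (k n) (ktilde M k n)" for n
  define g where "g n m = real (k n choose m) * real (ktilde M k n choose m)
      * (- R n) ^ (ktilde M k n - m) * R n ^ (k n - m) * Tco R n ^ (2 * m + 1)" for n m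
  have "interface_product M R 1 True (crossing_vector M k)
      = (\<Prod>n\<le>M. interface_factor R 1 True (crossing_vector M k) (Suc n))"
    unfolding interface_product_def atMost_atLeast0
    by (simp add: prod.shift_bounds_cl_Suc_ivl[symmetric])
  also have "\<dots> = (\<Prod>n\<le>M. above_closed_form (R n) (Tco R n) (k n) (ktilde M k n))"
    using k by (intro prod.cong refl interface_factor_crossing_vector) auto
  also have "\<dots> = (\<Prod>n\<le>M. \<Sum>m\<le>B n. g n m)"
    by (simp only: above_closed_form_eq_sum_min B_def g_def)
  also have "\<dots> = (\<Sum>h\<in>PiE {..M} (\<lambda>n. {..B n}). \<Prod>n\<le>M. g n (h n))"
    by (rule prod_sum_PiE) simp_all
  also have "\<dots> = bcoef M R k"
    unfolding bcoef_def
  proof (rule sum.reindex_bij_witness[where j = "\<lambda>h n. if n \<le> M then h n else 0" and i = "\<lambda>m. restrict m {..M}"])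
    fix m assume "m \<in> {m. (\<forall>n\<le>M. m n \<le> min (k n) (ktilde M k n)) \<and> (\<forall>n>M. m n = 0)}"
    then show "(\<lambda>n. if n \<le> M then restrict m {..M} n else 0) = m"
      and "restrict m {..M} \<in> PiE {..M} (\<lambda>n. {..B n})"
      by (auto simp: B_def fun_eq_iff)
  next
    fix h assume h: "h \<in> PiE {..M} (\<lambda>n. {..B n})"
    then show "restrict (\<lambda>n. if n \<le> M then h n else 0) {..M} = h"
      by (auto simp: fun_eq_iff PiE_def extensional_def)
    show "(\<lambda>n. if n \<le> M then h n else 0) \<in> {m. (\<forall>n\<le>M. m n \<le> min (k n) (ktilde M k n)) \<and> (\<forall>n>M. m n = 0)}"
      using h by (auto simp: B_def PiE_def Pi_def)
    show "(\<Prod>n\<le>M. real (k n choose (if n \<le> M then h n else 0)) * real (ktilde M k n choose (if n \<le> M then h n else 0)) *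
            (- R n) ^ (ktilde M k n - (if n \<le> M then h n else 0)) * R n ^ (k n - (if n \<le> M then h n else 0)) *
            Tco R n ^ (2 * (if n \<le> M then h n else 0) + 1)) = (\<Prod>n\<le>M. g n (h n))"
      unfolding g_def by (rule prod.cong) auto
  qed
  finally show ?thesis ..
qed

lemma sum_seq_weight_crossing_vector:
  assumes "k \<in> kset M"
  shows "(\<Sum>q\<in>absorbed_walks M 1 (crossing_vector M k). seq_weight R (0 # q)) = bcoef M R k"
proof -
  have "feasible_crossings M 1 (crossing_vector M k)"
    using assms feasible_crossings_from_top_iff by blast
  from sum_seq_weight_absorbed_walks[OF this, of 0] show ?thesis
    using assms by (simp add: bcoef_eq_interface_product)
qed

definition kset_at_time :: "nat \<Rightarrow> (nat \<Rightarrow> real) \<Rightarrow> real \<Rightarrow> (nat \<Rightarrow> nat) set" where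
  "kset_at_time M tau' s =
     {k \<in> kset M. (\<Sum>n\<le>M + 1. tau' n) / 2 + (\<Sum>n\<le>M. real (k n) * tau' n) = s}"

lemma finite_kset_at_time:
  assumes pos: "\<And>n. n \<le> M + 1 \<Longrightarrow> 0 < tau' n"
  shows "finite (kset_at_time M tau' s)"
proof (rule finite_subset)
  define N where "N = (\<Sum>n\<le>M. nat \<lceil>s / tau' n\<rceil>)"
  show "kset_at_time M tau' s \<subseteq> {k. \<forall>n. (n \<in> {..M} \<longrightarrow> k n \<in> {..N}) \<and> (n \<notin> {..M} \<longrightarrow> k n = 0)}"
  proof (intro subsetI CollectI allI conjI impI)
    fix k n assume k: "k \<in> kset_at_time M tau' s" and n: "n \<in> {..M}"
    have "0 \<le> (\<Sum>n\<le>M + 1. tau' n)"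
      using pos by (intro sum_nonneg) (auto simp: less_imp_le)
    moreover have "real (k n) * tau' n \<le> (\<Sum>n\<le>M. real (k n) * tau' n)"
      using n pos by (intro member_le_sum) (auto intro!: mult_nonneg_nonneg simp: less_imp_le)
    moreover have "(\<Sum>n\<le>M + 1. tau' n) / 2 + (\<Sum>n\<le>M. real (k n) * tau' n) = s"
      using k unfolding kset_at_time_def mem_Collect_eq by blast
    ultimately have "real (k n) * tau' n \<le> s" by linarith
    then have "real (k n) \<le> s / tau' n" using pos[of n] n by (simp add: le_divide_eq)
    then have "k n \<le> nat \<lceil>s / tau' n\<rceil>" by linarith
    also have "\<dots> \<le> N" unfolding N_def using n by (intro member_le_sum) auto
    finally show "k n \<in> {..N}" by simp
  qed (auto simp: kset_at_time_def kset_def)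
qed (rule finite_set_of_finite_funs; simp)

lemma trans_seqs_at_time:
  "{p. trans_seq M p \<and> arrival tau' p = s} =
     (\<Union>k\<in>kset_at_time M tau' s. (#) 0 ` absorbed_walks M 1 (crossing_vector M k))"
proof (intro set_eqI iffI)
  fix p assume "p \<in> {p. trans_seq M p \<and> arrival tau' p = s}"
  then obtain q where p: "p = 0 # q" "hd q = 1" "absorbed_walk M q" and s: "arrival tau' p = s"
    by (auto simp: trans_seq_iff_absorbed_walk)
  then have "feasible_crossings M 1 (crossings q)"
    using absorbed_walk_feasible_crossings by fastforce
  then obtain k where k: "k \<in> kset M" "crossings q = crossing_vector M k"
    using feasible_crossings_from_top_iff by blast
  then show "p \<in> (\<Union>k\<in>kset_at_time M tau' s. (#) 0 ` absorbed_walks M 1 (crossing_vector M k))"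
    using p s arrival_absorbed_walk[OF p(3,2) k] by (auto simp: absorbed_walks_def kset_at_time_def)
next
  fix p assume "p \<in> (\<Union>k\<in>kset_at_time M tau' s. (#) 0 ` absorbed_walks M 1 (crossing_vector M k))"
  then obtain k q where "k \<in> kset M" "(\<Sum>n\<le>M + 1. tau' n) / 2 + (\<Sum>n\<le>M. real (k n) * tau' n) = s"
    "p = 0 # q" "absorbed_walk M q" "hd q = 1" "crossings q = crossing_vector M k"
    by (auto simp: absorbed_walks_def kset_at_time_def)
  then show "p \<in> {p. trans_seq M p \<and> arrival tau' p = s}"
    using arrival_absorbed_walk by (auto simp: trans_seq_iff_absorbed_walk)
qed

lemma greenH_eq_sum_absorbed_walks:
  assumes "\<And>n. n \<le> M + 1 \<Longrightarrow> 0 < tau' n"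
  shows "greenH M tau' R s =
    (\<Sum>k\<in>kset_at_time M tau' s. \<Sum>q\<in>absorbed_walks M 1 (crossing_vector M k). seq_weight R (0 # q))"
proof -
  have "(#) 0 ` absorbed_walks M 1 (crossing_vector M k) \<inter> (#) 0 ` absorbed_walks M 1 (crossing_vector M k') = {}"
    if "k \<in> kset M" "k' \<in> kset M" "k \<noteq> k'" for k k'
    using that inj_on_crossing_vector[of M] by (auto simp: absorbed_walks_def inj_on_def)
  then show ?thesis
    unfolding greenH_def trans_seqs_at_time using finite_kset_at_time[OF assms]
    by (subst sum.UNION_disjoint) (auto simp: finite_absorbed_walks sum.reindex kset_at_time_def)
qed

theorem theorem2:
  fixes M :: nat and tau' R :: "nat \<Rightarrow> real"
  assumes "M \<ge> 1"
    and "\<And>n. n \<le> M + 1 \<Longrightarrow> tau' n > 0"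
    and "\<And>n. n \<le> M \<Longrightarrow> -1 < R n \<and> R n < 1"
  shows "\<forall>s. greenH M tau' R s = rhsH M tau' R s"
proof
  fix s
  have "greenH M tau' R s =
      (\<Sum>k\<in>kset_at_time M tau' s. \<Sum>q\<in>absorbed_walks M 1 (crossing_vector M k). seq_weight R (0 # q))"
    using assms(2) by (rule greenH_eq_sum_absorbed_walks)
  also have "\<dots> = (\<Sum>k\<in>kset_at_time M tau' s. bcoef M R k)"
    by (intro sum.cong refl sum_seq_weight_crossing_vector) (simp add: kset_at_time_def)
  also have "\<dots> = rhsH M tau' R s"
    unfolding rhsH_def kset_at_time_def ..
  finally show "greenH M tau' R s = rhsH M tau' R s" .
qed

end
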